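(* Let $F$ be a field and let $I\subseteq F_{\mathbb{Z}_2^2}\{X\}$ be the graded $T$-ideal generated by \begin{align*} (ab)v=v(ba), &\quad g(v)\ne 0,\ g(a)=g(b)\ne 0;\\ ((ax)b)v=v((ba)x), &\quad g(v)\ne 0,\ g(x)=0,\ g(a)=g(b)\ne 0;\\ v((ax)b)=((ba)x)v, &\quad g(v)\ne 0,\ g(x)=0,\ g(a)=g(b)\ne 0;\\ x\circ y=0, &\quad \langle g(x),g(y)\rangle=\mathbb{Z}_2^2;\\ (vb)a=v(ab), &\quad g(v)\notin\langle g(a),g(b)\rangle;\\ a(vb)=v(ba), &\quad \langle g(v),g(b)\rangle=\mathbb{Z}_2^2,\ g(a)=0;\\ (va)w+(wa)v=-(v\circ w)a, &\quad g(a)\ne 0,\ g(v),g(w)\notin\langle g(a)\rangle;\\ (va)(wb)+(wa)(vb)=-(v\circ w)(ba), &\quad g(a)\neq 0,\ g(v),g(w)\notin\langle g(a),g(b)\rangle;\\ (x,y,z)=0, &\quad |\langle g(x),g(y),g(z)\rangle|\le 2;\\ [x,y]=0, &\quad g(x)=g(y)=0, \end{align*} and write $p\equiv q$ for $p-q\in I$. Let $U$ be the subalgebra of $F_{\mathbb{Z}_2^2}\{X\}$ generated by all variables of nonzero degree, and let ${}^*:U\to U$ be the linear map defined on monomials by $x^*=-x$ for each variable $x$ (of nonzero degree) and $(vw)^*=w^*v^*$. Let $f\in U$ and let $x$ be a variable of nonzero degree. Then: (1) ${}^*$ is an involution of $U$ (an anti-automorphism of order $2$); (2) if $f_0=0$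 then $f^*\equiv -f$; (3) if $f=v\cdot w$ with $v,w\in U$ homogeneous and $g(v)=g(w)\neq0$, then $f^*\equiv w\cdot v$; (4) if $f_{g(x)}=0$ then $fx\equiv xf^*$; (5) under any graded evaluation of the variables in the $\mathbb{Z}_2^2$-graded octonion algebra $\mathbb{O}=\mathbf{C}(\mu,\beta,\gamma)$, the value of $f^*$ is the conjugate $\overline{f}$ of the value of $f$.
   Context: $\mathbb{Z}_2^2$ is written additively. $F_G\{X\}$: free nonassociative algebra on variables $x_i^a$ ($a\in G$), graded by $g(x_i^a)=a$, $g(uv)=g(u)g(v)$; for $f$ and $h\in G$, $f_h$ denotes the homogeneous component of $f$ of degree $h$. A graded $T$-ideal is an ideal invariant under all graded endomorphisms (variables sent to elements of the same degree). $[x,y]=xy-yx$, $x\circ y=xy+yx$, $(x,y,z)=(xy)z-x(yz)$. Octonions: Cayley–Dickson process $(A,\alpha)=A\oplus A$, $(a_1,a_2)(a_3,a_4)=(a_1a_3+\alpha a_4\bar a_2,\bar a_1a_4+a_3a_2)$, $\overline{(a_1,a_2)}=(\bar a_1,-a_2)$, graded $(A,\alpha)_{(h,0)}=A_h\oplus0$, $(A,\alpha)_{(h,1)}=0\oplus A_h$; $\mathbf{K}(\mu)=F\oplus Fv_1$ with $(a+bv_1)(c+dv_1)=ac+\mu bd+(ad+bc+bd)v_1$, $\overline{a+bv_1}=(a+b)-bv_1$, $4\mu+1\ne0$, trivially graded; $\mathbf{C}(\mu,\beta,\gamma)=((\mathbf{K}(\mu),\beta),\gamma)$, $\beta,\gamma\ne0$.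 A graded evaluation substitutes each variable by an element of $\mathbb{O}$ of the same degree. *)

theory Defs
  imports Main "HOL-Library.Poly_Mapping" "HOL-Library.Z2" "HOL-Library.Product_Plus"
begin

type_synonym grp = "bit \<times> bit"

inductive_set sgen :: "grp set \<Rightarrow> grp set" for S :: "grp set" where
  sgen_zero: "0 \<in> sgen S"
| sgen_base: "a \<in> S \<Longrightarrow> a \<in> sgen S"
| sgen_add: "a \<in> sgen S \<Longrightarrow> b \<in> sgen S \<Longrightarrow> a + b \<in> sgen S"

text \<open>Variables x_i^a: index i and degree a.\<close>
type_synonym var = "nat \<times> grp"

definition vdeg :: "var \<Rightarrow> grp" where "vdeg x = snd x"

datatype fmon = MVar var | MMul fmon fmon

fun mdeg :: "fmon \<Rightarrow> grp" where
  "mdeg (MVar x) = vdeg x"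
| "mdeg (MMul u v) = mdeg u + mdeg v"

type_synonym 'a fpoly = "fmon \<Rightarrow>\<^sub>0 'a"

definition pscale :: "'a::field \<Rightarrow> 'a fpoly \<Rightarrow> 'a fpoly" where
  "pscale c p = Poly_Mapping.map (\<lambda>y. c * y) p"

definition pmul :: "'a::field fpoly \<Rightarrow> 'a fpoly \<Rightarrow> 'a fpoly" where
  "pmul p q = (\<Sum>m\<in>Poly_Mapping.keys p. \<Sum>n\<in>Poly_Mapping.keys q.
       Poly_Mapping.single (MMul m n) (Poly_Mapping.lookup p m * Poly_Mapping.lookup q n))"

definition pvar :: "var \<Rightarrow> 'a::field fpoly" where
  "pvar x = Poly_Mapping.single (MVar x) 1"

definition hcomp :: "grp \<Rightarrow> 'a::field fpoly \<Rightarrow> 'a fpoly" where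
  "hcomp h f = (\<Sum>m\<in>Poly_Mapping.keys f. if mdeg m = h then Poly_Mapping.single m (Poly_Mapping.lookup f m) else 0)"

definition homogeneous :: "grp \<Rightarrow> 'a::field fpoly \<Rightarrow> bool" where
  "homogeneous h f \<longleftrightarrow> hcomp h f = f"

definition comm :: "'a::field fpoly \<Rightarrow> 'a fpoly \<Rightarrow> 'a fpoly" where
  "comm x y = pmul x y - pmul y x"

definition jordan :: "'a::field fpoly \<Rightarrow> 'a fpoly \<Rightarrow> 'a fpoly" where
  "jordan x y = pmul x y + pmul y x"

definition assoc :: "'a::field fpoly \<Rightarrow> 'a fpoly \<Rightarrow> 'a fpoly \<Rightarrow> 'a fpoly" where
  "assoc x y z = pmul (pmul x y) z - pmul x (pmul y z)"

fun msubst :: "(var \<Rightarrow> 'a::field fpoly) \<Rightarrow> fmon \<Rightarrow> 'a fpoly" where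
  "msubst \<sigma> (MVar x) = \<sigma> x"
| "msubst \<sigma> (MMul u v) = pmul (msubst \<sigma> u) (msubst \<sigma> v)"

definition psubst :: "(var \<Rightarrow> 'a::field fpoly) \<Rightarrow> 'a fpoly \<Rightarrow> 'a fpoly" where
  "psubst \<sigma> p = (\<Sum>m\<in>Poly_Mapping.keys p. pscale (Poly_Mapping.lookup p m) (msubst \<sigma> m))"

definition graded_subst :: "(var \<Rightarrow> 'a::field fpoly) \<Rightarrow> bool" where
  "graded_subst \<sigma> \<longleftrightarrow> (\<forall>x. homogeneous (vdeg x) (\<sigma> x))"

definition is_ideal :: "'a::field fpoly set \<Rightarrow> bool" where
  "is_ideal J \<longleftrightarrow> 0 \<in> J \<and> (\<forall>p\<in>J. \<forall>q\<in>J. p + q \<in> J) \<and> (\<forall>c. \<forall>p\<in>J. pscale c p \<in> J)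
     \<and> (\<forall>p\<in>J. \<forall>q. pmul p q \<in> J \<and> pmul q p \<in> J)"

definition graded_T_ideal :: "'a::field fpoly set \<Rightarrow> bool" where
  "graded_T_ideal J \<longleftrightarrow> is_ideal J \<and> (\<forall>\<sigma>. graded_subst \<sigma> \<longrightarrow> (\<forall>p\<in>J. psubst \<sigma> p \<in> J))"

definition TI_gen :: "'a::field fpoly set \<Rightarrow> 'a fpoly set" where
  "TI_gen S = \<Inter>{J. graded_T_ideal J \<and> S \<subseteq> J}"

definition gens :: "'a::field fpoly set" where
  "gens =
    {pmul (pmul (pvar a) (pvar b)) (pvar v) - pmul (pvar v) (pmul (pvar b) (pvar a)) | a b v.
        vdeg v \<noteq> 0 \<and> vdeg a = vdeg b \<and> vdeg a \<noteq> 0}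
  \<union> {pmul (pmul (pmul (pvar a) (pvar x)) (pvar b)) (pvar v)
       - pmul (pvar v) (pmul (pmul (pvar b) (pvar a)) (pvar x)) | a b v x.
        vdeg v \<noteq> 0 \<and> vdeg x = 0 \<and> vdeg a = vdeg b \<and> vdeg a \<noteq> 0}
  \<union> {pmul (pvar v) (pmul (pmul (pvar a) (pvar x)) (pvar b))
       - pmul (pmul (pmul (pvar b) (pvar a)) (pvar x)) (pvar v) | a b v x.
        vdeg v \<noteq> 0 \<and> vdeg x = 0 \<and> vdeg a = vdeg b \<and> vdeg a \<noteq> 0}
  \<union> {jordan (pvar x) (pvar y) | x y. sgen {vdeg x, vdeg y} = UNIV}
  \<union> {pmul (pmul (pvar v) (pvar b)) (pvar a) - pmul (pvar v) (pmul (pvar a) (pvar b)) | a b v.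
        vdeg v \<notin> sgen {vdeg a, vdeg b}}
  \<union> {pmul (pvar a) (pmul (pvar v) (pvar b)) - pmul (pvar v) (pmul (pvar b) (pvar a)) | a b v.
        sgen {vdeg v, vdeg b} = UNIV \<and> vdeg a = 0}
  \<union> {pmul (pmul (pvar v) (pvar a)) (pvar w) + pmul (pmul (pvar w) (pvar a)) (pvar v)
       + pmul (jordan (pvar v) (pvar w)) (pvar a) | a v w.
        vdeg a \<noteq> 0 \<and> vdeg v \<notin> sgen {vdeg a} \<and> vdeg w \<notin> sgen {vdeg a}}
  \<union> {pmul (pmul (pvar v) (pvar a)) (pmul (pvar w) (pvar b))
       + pmul (pmul (pvar w) (pvar a)) (pmul (pvar v) (pvar b))
       + pmul (jordan (pvar v) (pvar w)) (pmul (pvar b) (pvar a)) | a b v w.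
        vdeg a \<noteq> 0 \<and> vdeg v \<notin> sgen {vdeg a, vdeg b} \<and> vdeg w \<notin> sgen {vdeg a, vdeg b}}
  \<union> {assoc (pvar x) (pvar y) (pvar z) | x y z. card (sgen {vdeg x, vdeg y, vdeg z}) \<le> 2}
  \<union> {comm (pvar x) (pvar y) | x y. vdeg x = 0 \<and> vdeg y = 0}"

definition Iid :: "'a::field fpoly set" where
  "Iid = TI_gen gens"

definition is_subalgebra :: "'a::field fpoly set \<Rightarrow> bool" where
  "is_subalgebra A \<longleftrightarrow> 0 \<in> A \<and> (\<forall>p\<in>A. \<forall>q\<in>A. p + q \<in> A) \<and> (\<forall>c. \<forall>p\<in>A. pscale c p \<in> A)
     \<and> (\<forall>p\<in>A. \<forall>q\<in>A. pmul p q \<in> A)"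

definition Usub :: "'a::field fpoly set" where
  "Usub = \<Inter>{A. is_subalgebra A \<and> {pvar x | x. vdeg x \<noteq> 0} \<subseteq> A}"

fun mstar :: "fmon \<Rightarrow> 'a::field fpoly" where
  "mstar (MVar x) = - pvar x"
| "mstar (MMul v w) = pmul (mstar w) (mstar v)"

definition star :: "'a::field fpoly \<Rightarrow> 'a fpoly" where
  "star f = (\<Sum>m\<in>Poly_Mapping.keys f. pscale (Poly_Mapping.lookup f m) (mstar m))"

type_synonym 'a kalg = "'a \<times> 'a"
type_synonym 'a qalg = "'a kalg \<times> 'a kalg"
type_synonym 'a oalg = "'a qalg \<times> 'a qalg"

fun kmul :: "'a::field \<Rightarrow> 'a kalg \<Rightarrow> 'a kalg \<Rightarrow> 'a kalg" where
  "kmul \<mu> (a, b) (c, d) = (a * c + \<mu> * b * d, a * d + b * c + b * d)"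

fun kconj :: "'a::field kalg \<Rightarrow> 'a kalg" where
  "kconj (a, b) = (a + b, - b)"

fun kscale :: "'a::field \<Rightarrow> 'a kalg \<Rightarrow> 'a kalg" where
  "kscale c (a, b) = (c * a, c * b)"

fun qmul :: "'a::field \<Rightarrow> 'a \<Rightarrow> 'a qalg \<Rightarrow> 'a qalg \<Rightarrow> 'a qalg" where
  "qmul \<mu> \<beta> (a1, a2) (a3, a4) =
     (kmul \<mu> a1 a3 + kscale \<beta> (kmul \<mu> a4 (kconj a2)), kmul \<mu> (kconj a1) a4 + kmul \<mu> a3 a2)"

fun qconj :: "'a::field qalg \<Rightarrow> 'a qalg" where
  "qconj (a1, a2) = (kconj a1, - a2)"

fun qscale :: "'a::field \<Rightarrow> 'a qalg \<Rightarrow> 'a qalg" where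
  "qscale c (a1, a2) = (kscale c a1, kscale c a2)"

fun omul :: "'a::field \<Rightarrow> 'a \<Rightarrow> 'a \<Rightarrow> 'a oalg \<Rightarrow> 'a oalg \<Rightarrow> 'a oalg" where
  "omul \<mu> \<beta> \<gamma> (a1, a2) (a3, a4) =
     (qmul \<mu> \<beta> a1 a3 + qscale \<gamma> (qmul \<mu> \<beta> a4 (qconj a2)),
      qmul \<mu> \<beta> (qconj a1) a4 + qmul \<mu> \<beta> a3 a2)"

fun oconj :: "'a::field oalg \<Rightarrow> 'a oalg" where
  "oconj (a1, a2) = (qconj a1, - a2)"

fun oscale :: "'a::field \<Rightarrow> 'a oalg \<Rightarrow> 'a oalg" where
  "oscale c (a1, a2) = (qscale c a1, qscale c a2)"

text \<open>Grading: K trivially graded; Q = (K,beta) graded by Z_2 with Q_0 = K+0, Q_1 = 0+K;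
  O = (Q,gamma) graded by Z_2^2 with O_(h,0) = Q_h + 0 and O_(h,1) = 0 + Q_h.\<close>
definition qhom :: "bit \<Rightarrow> 'a::field qalg set" where
  "qhom h = (if h = 0 then {(a, 0) | a. True} else {(0, a) | a. True})"

definition ohom :: "grp \<Rightarrow> 'a::field oalg set" where
  "ohom g = (if snd g = 0 then {(q, 0) | q. q \<in> qhom (fst g)} else {(0, q) | q. q \<in> qhom (fst g)})"

fun meval :: "'a::field \<Rightarrow> 'a \<Rightarrow> 'a \<Rightarrow> (var \<Rightarrow> 'a oalg) \<Rightarrow> fmon \<Rightarrow> 'a oalg" where
  "meval \<mu> \<beta> \<gamma> \<phi> (MVar x) = \<phi> x"
| "meval \<mu> \<beta> \<gamma> \<phi> (MMul u v) = omul \<mu> \<beta> \<gamma> (meval \<mu> \<beta> \<gamma> \<phi> u) (meval \<mu> \<beta> \<gamma> \<phi> v)"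

definition peval :: "'a::field \<Rightarrow> 'a \<Rightarrow> 'a \<Rightarrow> (var \<Rightarrow> 'a oalg) \<Rightarrow> 'a fpoly \<Rightarrow> 'a oalg" where
  "peval \<mu> \<beta> \<gamma> \<phi> f = (\<Sum>m\<in>Poly_Mapping.keys f. oscale (Poly_Mapping.lookup f m) (meval \<mu> \<beta> \<gamma> \<phi> m))"

definition graded_eval :: "(var \<Rightarrow> 'a::field oalg) \<Rightarrow> bool" where
  "graded_eval \<phi> \<longleftrightarrow> (\<forall>x. \<phi> x \<in> ohom (vdeg x))"

end

theory Submission
  imports Defs
begin

text \<open>On a monomial \<open>m\<close> the involution is \<open>m\<^sup>* = (-1)\<^sup>n rev m\<close>, \<open>n\<close> the number of variables
  of \<open>m\<close>, and \<open>rev\<close> reversing every product. Hence (1) is formal, and so is (5): octonion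
  conjugation reverses products for all parameters \<open>\<mu>, \<beta>, \<gamma>\<close> and is \<open>-1\<close> on every homogeneous component of nonzero degree.

  For (2)--(4) one shows by induction on a monomial \<open>m\<close> of degree \<open>d\<close> that \<open>m\<^sup>* \<equiv> -m\<close> if
  \<open>d \<noteq> 0\<close>, while if \<open>d = 0\<close> moving \<open>m\<close> across a homogeneous element of nonzero degree turns it
  into \<open>m\<^sup>*\<close> and vice versa. For a product \<open>uv\<close> of degrees \<open>a, b\<close>: if \<open>a \<noteq> b\<close> this follows from
  the Jordan identity \<open>x \<circ> y = 0\<close> and the degree zero case; if \<open>a = b \<noteq> 0\<close> from the identity
  \<open>(ab)v = v(ba)\<close>; and if \<open>a = b = 0\<close> from associativity on a cyclic subgroup together with
  commutativity in degree zero.\<close>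

abbreviation "lookup \<equiv> Poly_Mapping.lookup"
abbreviation "keys \<equiv> Poly_Mapping.keys"
abbreviation "single \<equiv> Poly_Mapping.single"

section \<open>Arithmetic of the free nonassociative algebra\<close>

lemma lookup_pscale [simp]: "lookup (pscale c p) m = c * lookup p m"
  by (simp add: pscale_def map.rep_eq when_def)

lemma lookup_pmul:
  "lookup (pmul p q) k = (case k of MVar _ \<Rightarrow> 0 | MMul m n \<Rightarrow> lookup p m * lookup q n)"
proof (cases k)
  case (MVar x)
  then show ?thesis by (simp add: pmul_def lookup_sum lookup_single when_def)
next
  case (MMul m n)
  have "lookup (pmul p q) k =
      (\<Sum>m'\<in>keys p. \<Sum>n'\<in>keys q. if m' = m \<and> n' = n then lookup p m' * lookup q n' else 0)"
    by (simp add: pmul_def lookup_sum lookup_single when_def MMul eq_commute)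
  also have "\<dots> = (\<Sum>m'\<in>keys p. if m' = m then lookup p m' * lookup q n else 0)"
    by (rule sum.cong) (auto simp: if_distrib in_keys_iff cong: if_cong)
  also have "\<dots> = lookup p m * lookup q n" by (auto simp: in_keys_iff)
  finally show ?thesis using MMul by simp
qed

lemma lookup_pmul_MVar [simp]: "lookup (pmul p q) (MVar x) = 0"
  by (simp add: lookup_pmul)

lemma lookup_pmul_MMul [simp]: "lookup (pmul p q) (MMul m n) = lookup p m * lookup q n"
  by (simp add: lookup_pmul)

lemma keys_pmulE:
  assumes "k \<in> keys (pmul p q)"
  obtains m n where "k = MMul m n" "m \<in> keys p" "n \<in> keys q"
  using assms by (cases k) (auto simp: in_keys_iff)

lemma pmul_add_left: "pmul (p + q) r = pmul p r + pmul q r"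
  and pmul_add_right: "pmul r (p + q) = pmul r p + pmul r q"
  and pmul_diff_left: "pmul (p - q) r = pmul p r - pmul q r"
  and pmul_diff_right: "pmul r (p - q) = pmul r p - pmul r q"
  and pmul_minus_left: "pmul (- p) r = - pmul p r"
  and pmul_minus_right: "pmul r (- p) = - pmul r p"
  and pmul_pscale_left: "pmul (pscale c p) r = pscale c (pmul p r)"
  and pmul_pscale_right: "pmul r (pscale c p) = pscale c (pmul r p)"
  by (rule poly_mapping_eqI, case_tac k; simp add: lookup_add lookup_minus algebra_simps)+

lemma pmul_zero_left [simp]: "pmul 0 r = 0"
  and pmul_zero_right [simp]: "pmul r 0 = 0"
  by (rule poly_mapping_eqI, case_tac k; simp)+

lemma pmul_sum_left: "pmul (\<Sum>i\<in>A. F i) r = (\<Sum>i\<in>A. pmul (F i) r)"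
  by (induction A rule: infinite_finite_induct) (auto simp: pmul_add_left)

lemma pmul_sum_right: "pmul r (\<Sum>i\<in>A. F i) = (\<Sum>i\<in>A. pmul r (F i))"
  by (induction A rule: infinite_finite_induct) (auto simp: pmul_add_right)

lemma pmul_single: "pmul (single m a) (single n b) = single (MMul m n) (a * b)"
  by (rule poly_mapping_eqI, case_tac k) (auto simp: lookup_single when_def)

lemma pscale_add_right: "pscale c (p + q) = pscale c p + pscale c q"
  and pscale_add_left: "pscale (c + d) p = pscale c p + pscale d p"
  and pscale_minus_right: "pscale c (- p) = - pscale c p"
  and pscale_diff_right: "pscale c (p - q) = pscale c p - pscale c q"
  and pscale_mult: "pscale (c * d) p = pscale c (pscale d p)"
  and pscale_minus_one: "pscale (- 1) p = - p"
  by (rule poly_mapping_eqI; simp add: lookup_add lookup_minus algebra_simps)+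

lemma pscale_zero_left [simp]: "pscale 0 p = 0"
  and pscale_zero_right [simp]: "pscale c 0 = 0"
  and pscale_one [simp]: "pscale 1 p = p"
  by (rule poly_mapping_eqI; simp)+

lemma pscale_sum_right: "pscale c (\<Sum>i\<in>A. F i) = (\<Sum>i\<in>A. pscale c (F i))"
  by (induction A rule: infinite_finite_induct) (auto simp: pscale_add_right)

lemma pscale_single: "pscale c (single m a) = single m (c * a)"
  by (rule poly_mapping_eqI) (simp add: lookup_single when_def)

lemma sum_keys_single_expansion: "(\<Sum>m\<in>keys f. pscale (lookup f m) (single m 1)) = f"
proof (rule poly_mapping_eqI)
  fix k
  have "lookup (\<Sum>m\<in>keys f. pscale (lookup f m) (single m 1)) k =
      (\<Sum>m\<in>keys f. if m = k then lookup f m else 0)"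
    by (simp add: lookup_sum lookup_single when_def if_distrib cong: if_cong)
  also have "\<dots> = lookup f k" by (auto simp: in_keys_iff)
  finally show "lookup (\<Sum>m\<in>keys f. pscale (lookup f m) (single m 1)) k = lookup f k" .
qed

lemma sum_keys_add:
  fixes S :: "'k \<Rightarrow> 'c::comm_monoid_add \<Rightarrow> 'b::comm_monoid_add"
  assumes "\<And>m. S m 0 = 0" and "\<And>m a b. S m (a + b) = S m a + S m b"
  shows "(\<Sum>m\<in>keys (p + q). S m (lookup (p + q) m)) =
    (\<Sum>m\<in>keys p. S m (lookup p m)) + (\<Sum>m\<in>keys q. S m (lookup q m))"
proof -
  let ?K = "keys p \<union> keys q"
  have extend: "(\<Sum>m\<in>keys r. S m (lookup r m)) = (\<Sum>m\<in>?K. S m (lookup r m))"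
    if "keys r \<subseteq> ?K" for r
    by (rule sum.mono_neutral_left) (use that assms(1) in \<open>auto simp: in_keys_iff\<close>)
  have "(\<Sum>m\<in>keys (p + q). S m (lookup (p + q) m)) = (\<Sum>m\<in>?K. S m (lookup (p + q) m))"
    by (rule extend) (rule keys_add)
  also have "\<dots> = (\<Sum>m\<in>?K. S m (lookup p m)) + (\<Sum>m\<in>?K. S m (lookup q m))"
    by (simp add: lookup_add assms(2) sum.distrib)
  also have "\<dots> = (\<Sum>m\<in>keys p. S m (lookup p m)) + (\<Sum>m\<in>keys q. S m (lookup q m))"
    by (simp add: extend)
  finally show ?thesis .
qed

lemma sum_keys_single:
  assumes "\<And>m. S m 0 = 0"
  shows "(\<Sum>k\<in>keys (single m c). S k (lookup (single m c) k)) = S m c"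
  using assms by (cases "c = 0") auto

lemma psubst_add: "psubst \<sigma> (p + q) = psubst \<sigma> p + psubst \<sigma> q"
  unfolding psubst_def by (rule sum_keys_add) (simp_all add: pscale_add_left)

lemma psubst_diff: "psubst \<sigma> (p - q) = psubst \<sigma> p - psubst \<sigma> q"
  by (metis add_diff_cancel diff_add_cancel psubst_add)

lemma psubst_zero [simp]: "psubst \<sigma> 0 = 0"
  by (simp add: psubst_def)

lemma psubst_sum: "psubst \<sigma> (\<Sum>i\<in>A. F i) = (\<Sum>i\<in>A. psubst \<sigma> (F i))"
  by (induction A rule: infinite_finite_induct) (auto simp: psubst_add)

lemma psubst_single: "psubst \<sigma> (single m c) = pscale c (msubst \<sigma> m)"
  unfolding psubst_def by (rule sum_keys_single) simp

lemma psubst_pvar: "psubst \<sigma> (pvar x) = \<sigma> x"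
  by (simp add: pvar_def psubst_single)

lemma psubst_pmul: "psubst \<sigma> (pmul p q) = pmul (psubst \<sigma> p) (psubst \<sigma> q)"
proof -
  have "psubst \<sigma> (pmul p q) = (\<Sum>m\<in>keys p. \<Sum>n\<in>keys q.
      pscale (lookup p m) (pscale (lookup q n) (pmul (msubst \<sigma> m) (msubst \<sigma> n))))"
    by (simp add: pmul_def psubst_sum psubst_single pscale_mult)
  also have "\<dots> = pmul (psubst \<sigma> p) (psubst \<sigma> q)"
    unfolding psubst_def pmul_sum_left pmul_pscale_left
    by (simp add: pmul_sum_right pmul_pscale_right pscale_sum_right)
  finally show ?thesis .
qed

fun mrev :: "fmon \<Rightarrow> fmon" where
  "mrev (MVar x) = MVar x"
| "mrev (MMul u v) = MMul (mrev v) (mrev u)"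

fun var_count :: "fmon \<Rightarrow> nat" where
  "var_count (MVar x) = 1"
| "var_count (MMul u v) = var_count u + var_count v"

lemma mrev_mrev [simp]: "mrev (mrev m) = m"
  by (induction m) auto

lemma var_count_mrev [simp]: "var_count (mrev m) = var_count m"
  by (induction m) auto

definition msign :: "fmon \<Rightarrow> 'a::field" where
  "msign m = (- 1) ^ var_count m"

lemma msign_MMul: "msign (MMul u v) = msign u * msign v"
  by (simp add: msign_def power_add)

lemma msign_mrev [simp]: "msign (mrev m) = msign m"
  by (simp add: msign_def)

lemma msign_mult_self: "(msign m :: 'a::field) * msign m = 1"
  by (simp add: msign_def flip: power_add)

lemma mstar_eq_single: "(mstar m :: 'a::field fpoly) = single (mrev m) (msign m)"
  by (induction m) (simp_all add: pvar_def msign_def single_uminus pmul_single power_add mult.commute)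

lemma lookup_star: "lookup (star f) k = (msign k :: 'a::field) * lookup f (mrev k)"
proof -
  have "lookup (star f) k = (\<Sum>m\<in>keys f. if m = mrev k then lookup f m * msign m else 0)"
    unfolding star_def mstar_eq_single
    by (rule trans[OF lookup_sum sum.cong]) (auto simp: lookup_single when_def)
  also have "\<dots> = msign k * lookup f (mrev k)"
    by (auto simp: in_keys_iff)
  finally show ?thesis .
qed

lemma star_add: "star (f + h) = star f + star h"
  and star_zero: "star 0 = 0"
  and star_pscale: "star (pscale c f) = pscale c (star f)"
  and star_star: "star (star f) = f"
  by (rule poly_mapping_eqI; simp add: lookup_star lookup_add algebra_simps msign_mult_self
      flip: mult.assoc)+

lemma star_pmul: "star (pmul f h) = pmul (star h) (star f)"
  by (rule poly_mapping_eqI, case_tac k) (simp_all add: lookup_star msign_MMul)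

lemma star_pvar: "star (pvar x) = - pvar x"
  by (simp add: star_def pvar_def)

lemma lookup_hcomp: "lookup (hcomp h f) k = (if mdeg k = h then lookup f k else 0)"
proof -
  have "lookup (hcomp h f) k =
      (\<Sum>m\<in>keys f. if m = k then (if mdeg k = h then lookup f m else 0) else 0)"
    unfolding hcomp_def by (rule trans[OF lookup_sum sum.cong]) (auto simp: lookup_single when_def)
  also have "\<dots> = (if mdeg k = h then lookup f k else 0)" by (auto simp: in_keys_iff)
  finally show ?thesis .
qed

lemma hcomp_eq_0_iff: "hcomp h f = 0 \<longleftrightarrow> (\<forall>m\<in>keys f. mdeg m \<noteq> h)"
  by (auto simp: poly_mapping_eq_iff fun_eq_iff lookup_hcomp in_keys_iff)

lemma homogeneous_iff: "homogeneous h f \<longleftrightarrow> (\<forall>m\<in>keys f. mdeg m = h)"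
  by (auto simp: homogeneous_def poly_mapping_eq_iff fun_eq_iff lookup_hcomp in_keys_iff)

lemma homogeneous_pvar: "homogeneous (vdeg x) (pvar x)"
  by (simp add: homogeneous_iff pvar_def)

lemma homogeneous_uminus: "homogeneous h f \<Longrightarrow> homogeneous h (- f)"
  by (simp add: homogeneous_iff)

lemma homogeneous_pmul:
  assumes "homogeneous a p" "homogeneous b q"
  shows "homogeneous (a + b) (pmul p q)"
  unfolding homogeneous_iff
proof
  fix k assume "k \<in> keys (pmul p q)"
  then obtain m n where "k = MMul m n" "m \<in> keys p" "n \<in> keys q" by (rule keys_pmulE)
  then show "mdeg k = a + b" using assms by (simp add: homogeneous_iff)
qed

lemma grp_cases: "(g::grp) = (0, 0) \<or> g = (0, 1) \<or> g = (1, 0) \<or> g = (1, 1)"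
  by (cases g; metis bit_not_one_iff)

lemma grp_add_self [simp]: "(g::grp) + g = 0"
proof -
  have "(b::bit) + b = 0" for b by (cases b rule: bit.exhaust) auto
  then show ?thesis by (cases g) (simp add: zero_prod_def)
qed

lemma grp_add_eq_0_iff: "(a::grp) + b = 0 \<longleftrightarrow> a = b"
  by (metis add.assoc add.right_neutral grp_add_self)

lemma sgen_eq_UNIV:
  assumes "d1 \<noteq> 0" "d2 \<noteq> 0" "d1 \<noteq> d2"
  shows "sgen {d1, d2} = UNIV"
proof -
  have generators: "d1 \<in> sgen {d1, d2}" "d2 \<in> sgen {d1, d2}" "0 \<in> sgen {d1, d2}"
    by (auto intro: sgen.intros)
  have "x \<in> sgen {d1, d2}" for x :: grp
  proof -
    have "x \<in> {0, d1, d2, d1 + d2}"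
      using grp_cases[of x] grp_cases[of d1] grp_cases[of d2] assms
      by (elim disjE) (simp_all add: zero_prod_def)
    then show ?thesis using generators by (auto intro: sgen.intros)
  qed
  then show ?thesis by auto
qed

lemma card_sgen_le_2:
  assumes "S \<subseteq> {0, d}"
  shows "card (sgen S) \<le> 2"
proof -
  have "sgen S \<subseteq> {0, d}"
  proof
    fix x assume "x \<in> sgen S"
    then show "x \<in> {0, d}" by induction (use assms in auto)
  qed
  then have "card (sgen S) \<le> card {0, d}" by (simp add: card_mono)
  also have "\<dots> \<le> 2" by (simp add: card_insert_le_m1)
  finally show ?thesis .
qed

lemma is_subalgebra_Usub: "is_subalgebra Usub"
  unfolding Usub_def is_subalgebra_def by blast

lemma Usub_subset:
  "is_subalgebra A \<Longrightarrow> (\<And>x. vdeg x \<noteq> 0 \<Longrightarrow> pvar x \<in> A) \<Longrightarrow> Usub \<subseteq> A"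
  unfolding Usub_def by auto

lemma pvar_in_Usub: "vdeg x \<noteq> 0 \<Longrightarrow> pvar x \<in> Usub"
  unfolding Usub_def by blast

lemma pmul_in_Usub: "p \<in> Usub \<Longrightarrow> q \<in> Usub \<Longrightarrow> pmul p q \<in> Usub"
  using is_subalgebra_Usub unfolding is_subalgebra_def by blast

fun nonzero_vars :: "fmon \<Rightarrow> bool" where
  "nonzero_vars (MVar x) \<longleftrightarrow> vdeg x \<noteq> 0"
| "nonzero_vars (MMul u v) \<longleftrightarrow> nonzero_vars u \<and> nonzero_vars v"

lemma nonzero_vars_keys_Usub:
  assumes "f \<in> Usub" "m \<in> keys f"
  shows "nonzero_vars m"
proof -
  define A :: "'a fpoly set" where "A = {f. \<forall>m\<in>keys f. nonzero_vars m}"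
  have "p + q \<in> A" if "p \<in> A" "q \<in> A" for p q
    using that keys_add[of p q] unfolding A_def by blast
  moreover have "pscale c p \<in> A" if "p \<in> A" for c p
    using that unfolding A_def by (auto simp: in_keys_iff)
  moreover have "pmul p q \<in> A" if "p \<in> A" "q \<in> A" for p q
    using that unfolding A_def by (auto elim: keys_pmulE)
  moreover have "0 \<in> A" by (simp add: A_def)
  ultimately have "is_subalgebra A"
    unfolding is_subalgebra_def by blast
  moreover have "vdeg x \<noteq> 0 \<Longrightarrow> pvar x \<in> A" for x
    by (simp add: A_def pvar_def)
  ultimately have "Usub \<subseteq> A" by (rule Usub_subset)
  then show ?thesis using assms unfolding A_def by blast
qed

lemma star_in_Usub:
  assumes "f \<in> Usub"
  shows "star f \<in> Usub"
proof -
  define A :: "'a fpoly set" where "A = {f. f \<in> Usub \<and> star f \<in> Usub}"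
  have closed: "0 \<in> Usub" "p \<in> Usub \<Longrightarrow> q \<in> Usub \<Longrightarrow> p + q \<in> Usub"
    "p \<in> Usub \<Longrightarrow> pscale c p \<in> Usub" "p \<in> Usub \<Longrightarrow> q \<in> Usub \<Longrightarrow> pmul p q \<in> Usub"
    for p q :: "'a fpoly" and c
    using is_subalgebra_Usub unfolding is_subalgebra_def by blast+
  have "is_subalgebra A"
    unfolding is_subalgebra_def A_def
    by (simp add: closed star_zero star_add star_pscale star_pmul)
  moreover have "pvar x \<in> A" if "vdeg x \<noteq> 0" for x
    using closed(3)[OF pvar_in_Usub[OF that], of "- 1"] pvar_in_Usub[OF that]
    by (simp add: A_def star_pvar pscale_minus_one)
  ultimately have "Usub \<subseteq> A" by (rule Usub_subset)
  then show ?thesis using assms unfolding A_def by blast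
qed

lemma is_ideal_Iid: "is_ideal Iid"
proof -
  have "is_ideal J" if "J \<in> {J. graded_T_ideal J \<and> gens \<subseteq> J}" for J :: "'a fpoly set"
    using that by (simp add: graded_T_ideal_def)
  then show ?thesis
    unfolding Iid_def TI_gen_def is_ideal_def by (simp add: Inter_iff)
qed

lemma psubst_gens_in_Iid:
  assumes "graded_subst \<sigma>" "p \<in> gens"
  shows "psubst \<sigma> p \<in> Iid"
  using assms unfolding Iid_def TI_gen_def graded_T_ideal_def by blast

definition cong_I :: "'a::field fpoly \<Rightarrow> 'a fpoly \<Rightarrow> bool" (infix \<open>\<approx>\<close> 50) where
  "p \<approx> q \<longleftrightarrow> p - q \<in> Iid"

lemma cong_I_refl [simp]: "p \<approx> p"
proof -
  have "0 \<in> (Iid :: 'a fpoly set)" using is_ideal_Iid unfolding is_ideal_def by blast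
  then show ?thesis by (simp add: cong_I_def)
qed

lemma cong_I_add: "p \<approx> p' \<Longrightarrow> q \<approx> q' \<Longrightarrow> p + q \<approx> p' + q'"
proof -
  assume "p \<approx> p'" "q \<approx> q'"
  then have "(p - p') + (q - q') \<in> Iid"
    using is_ideal_Iid unfolding cong_I_def is_ideal_def by blast
  then show ?thesis by (simp add: cong_I_def algebra_simps)
qed

lemma cong_I_pscale: "p \<approx> q \<Longrightarrow> pscale c p \<approx> pscale c q"
  using is_ideal_Iid unfolding cong_I_def is_ideal_def
  by (metis pscale_diff_right)

lemma cong_I_uminus: "p \<approx> q \<Longrightarrow> - p \<approx> - q"
  using cong_I_pscale[of p q "- 1"] by (simp add: pscale_minus_one)

lemma cong_I_sym: "p \<approx> q \<Longrightarrow> q \<approx> p"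
  using cong_I_uminus[of p q] by (simp add: cong_I_def)

lemma cong_I_trans [trans]: "p \<approx> q \<Longrightarrow> q \<approx> r \<Longrightarrow> p \<approx> r"
  using cong_I_add[of p q q r] by (simp add: cong_I_def)

lemma cong_I_pmul: "p \<approx> p' \<Longrightarrow> q \<approx> q' \<Longrightarrow> pmul p q \<approx> pmul p' q'"
proof -
  assume "p \<approx> p'" "q \<approx> q'"
  then have "pmul (p - p') q + pmul p' (q - q') \<in> Iid"
    using is_ideal_Iid unfolding cong_I_def is_ideal_def by blast
  then show ?thesis by (simp add: cong_I_def pmul_diff_left pmul_diff_right)
qed

lemma cong_I_pmul_left: "p \<approx> q \<Longrightarrow> pmul p r \<approx> pmul q r"
  and cong_I_pmul_right: "p \<approx> q \<Longrightarrow> pmul r p \<approx> pmul r q"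
  by (simp_all add: cong_I_pmul)

lemma cong_I_sum:
  assumes "\<And>i. i \<in> A \<Longrightarrow> X i \<approx> Y i"
  shows "(\<Sum>i\<in>A. pscale (c i) (X i)) \<approx> (\<Sum>i\<in>A. pscale (c i) (Y i))"
  using assms
  by (induction A rule: infinite_finite_induct) (auto intro: cong_I_add cong_I_pscale)

lemma psubst_gens_cong_0: "graded_subst \<sigma> \<Longrightarrow> g \<in> gens \<Longrightarrow> psubst \<sigma> g \<approx> 0"
  by (simp add: cong_I_def psubst_gens_in_Iid)

section \<open>Consequences of the defining identities\<close>

lemma graded_subst_pvar: "graded_subst pvar"
  by (simp add: graded_subst_def homogeneous_pvar)

lemma graded_subst_upd:
  "graded_subst \<sigma> \<Longrightarrow> homogeneous (vdeg x) P \<Longrightarrow> graded_subst (\<sigma>(x := P))"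
  by (simp add: graded_subst_def)

lemma jordan_in_gens: "sgen {vdeg x, vdeg y} = UNIV \<Longrightarrow> jordan (pvar x) (pvar y) \<in> gens"
  unfolding gens_def by blast

lemma swap_in_gens:
  "vdeg z \<noteq> 0 \<Longrightarrow> vdeg x = vdeg y \<Longrightarrow> vdeg x \<noteq> 0 \<Longrightarrow>
    pmul (pmul (pvar x) (pvar y)) (pvar z) - pmul (pvar z) (pmul (pvar y) (pvar x)) \<in> gens"
  unfolding gens_def by (intro UnI1) blast

lemma assoc_in_gens:
  "card (sgen {vdeg x, vdeg y, vdeg z}) \<le> 2 \<Longrightarrow> assoc (pvar x) (pvar y) (pvar z) \<in> gens"
  unfolding gens_def by blast

lemma comm_in_gens: "vdeg x = 0 \<Longrightarrow> vdeg y = 0 \<Longrightarrow> comm (pvar x) (pvar y) \<in> gens"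
  unfolding gens_def by blast

lemma jordan_cong:
  assumes "homogeneous a P" "homogeneous b Q" "a \<noteq> 0" "b \<noteq> 0" "a \<noteq> b"
  shows "pmul P Q \<approx> - pmul Q P"
proof -
  define x y :: var where "x = (0, a)" and "y = (1, b)"
  have "graded_subst (pvar(x := P, y := Q))"
    using assms by (intro graded_subst_upd graded_subst_pvar) (simp_all add: x_def y_def vdeg_def)
  moreover have "jordan (pvar x) (pvar y) \<in> gens"
    using sgen_eq_UNIV[OF assms(3-5)] by (intro jordan_in_gens) (simp add: x_def y_def vdeg_def)
  ultimately have "psubst (pvar(x := P, y := Q)) (jordan (pvar x) (pvar y)) \<approx> 0"
    by (rule psubst_gens_cong_0)
  then show ?thesis
    by (simp add: jordan_def psubst_add psubst_pmul psubst_pvar x_def y_def cong_I_def)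
qed

lemma swap_cong:
  assumes "homogeneous a P" "homogeneous a Q" "homogeneous b R" "a \<noteq> 0" "b \<noteq> 0"
  shows "pmul (pmul P Q) R \<approx> pmul R (pmul Q P)"
proof -
  define x y z :: var where "x = (0, a)" and "y = (1, a)" and "z = (2, b)"
  let ?\<sigma> = "pvar(x := P, y := Q, z := R)"
  have "graded_subst ?\<sigma>"
    using assms by (intro graded_subst_upd graded_subst_pvar) (simp_all add: x_def y_def z_def vdeg_def)
  moreover have "pmul (pmul (pvar x) (pvar y)) (pvar z) - pmul (pvar z) (pmul (pvar y) (pvar x)) \<in> gens"
    using assms(4,5) by (intro swap_in_gens) (simp_all add: x_def y_def z_def vdeg_def)
  ultimately have "psubst ?\<sigma> (pmul (pmul (pvar x) (pvar y)) (pvar z) - pmul (pvar z) (pmul (pvar y) (pvar x))) \<approx> 0"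
    by (rule psubst_gens_cong_0)
  then show ?thesis
    by (simp add: psubst_diff psubst_pmul psubst_pvar x_def y_def z_def cong_I_def)
qed

lemma assoc_cong:
  assumes "homogeneous a P" "homogeneous b Q" "homogeneous c R" "{a, b, c} \<subseteq> {0, d}"
  shows "pmul (pmul P Q) R \<approx> pmul P (pmul Q R)"
proof -
  define x y z :: var where "x = (0, a)" and "y = (1, b)" and "z = (2, c)"
  let ?\<sigma> = "pvar(x := P, y := Q, z := R)"
  have "graded_subst ?\<sigma>"
    using assms by (intro graded_subst_upd graded_subst_pvar) (simp_all add: x_def y_def z_def vdeg_def)
  moreover have "assoc (pvar x) (pvar y) (pvar z) \<in> gens"
    using card_sgen_le_2[OF assms(4)] by (intro assoc_in_gens) (simp add: x_def y_def z_def vdeg_def)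
  ultimately have "psubst ?\<sigma> (assoc (pvar x) (pvar y) (pvar z)) \<approx> 0"
    by (rule psubst_gens_cong_0)
  then show ?thesis
    by (simp add: assoc_def psubst_diff psubst_pmul psubst_pvar x_def y_def z_def cong_I_def)
qed

lemma comm_cong:
  assumes "homogeneous 0 P" "homogeneous 0 Q"
  shows "pmul P Q \<approx> pmul Q P"
proof -
  define x y :: var where "x = (0, 0)" and "y = (1, 0)"
  have "graded_subst (pvar(x := P, y := Q))"
    using assms by (intro graded_subst_upd graded_subst_pvar) (simp_all add: x_def y_def vdeg_def)
  moreover have "comm (pvar x) (pvar y) \<in> gens"
    by (intro comm_in_gens) (simp_all add: x_def y_def vdeg_def)
  ultimately have "psubst (pvar(x := P, y := Q)) (comm (pvar x) (pvar y)) \<approx> 0"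
    by (rule psubst_gens_cong_0)
  then show ?thesis
    by (simp add: comm_def psubst_diff psubst_pmul psubst_pvar x_def y_def cong_I_def)
qed

section \<open>Monomials modulo \<open>I\<close>\<close>

definition twisted_central :: "'a::field fpoly \<Rightarrow> 'a fpoly \<Rightarrow> bool" where
  "twisted_central P P' \<longleftrightarrow> (\<forall>R e. homogeneous e R \<and> e \<noteq> 0 \<longrightarrow>
     pmul P R \<approx> pmul R P' \<and> pmul P' R \<approx> pmul R P)"

text \<open>The induction invariant for the pair \<open>(m, m\<^sup>*)\<close>, \<open>m\<close> a monomial of degree \<open>d\<close>.\<close>
definition star_pair :: "grp \<Rightarrow> 'a::field fpoly \<Rightarrow> 'a fpoly \<Rightarrow> bool" where
  "star_pair d P P' \<longleftrightarrow> homogeneous d P \<and> homogeneous d P' \<and>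
     (if d = 0 then twisted_central P P' else P' \<approx> - P)"

lemma twisted_centralD:
  assumes "twisted_central P P'" "homogeneous e R" "e \<noteq> 0"
  shows "pmul P R \<approx> pmul R P'" and "pmul P' R \<approx> pmul R P"
  using assms unfolding twisted_central_def by blast+

lemma twisted_central_commute: "twisted_central P P' \<Longrightarrow> twisted_central P' P"
  by (auto simp: twisted_central_def)

lemma star_pairD:
  assumes "star_pair d P P'"
  shows star_pair_homogeneous: "homogeneous d P" "homogeneous d P'"
    and star_pair_nonzero_cong: "d \<noteq> 0 \<Longrightarrow> P' \<approx> - P"
    and star_pair_zero_twisted_central: "d = 0 \<Longrightarrow> twisted_central P P'"
  using assms by (simp_all add: star_pair_def)

lemma star_pair_pvar: "vdeg x \<noteq> 0 \<Longrightarrow> star_pair (vdeg x) (pvar x) (- pvar x)"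
  by (simp add: star_pair_def homogeneous_pvar homogeneous_uminus)

lemma star_pair_pmul_right_cong:
  assumes P: "star_pair d P P'" and R: "homogeneous e R" "e \<noteq> 0" and "d \<noteq> e"
  shows "pmul P R \<approx> pmul R P'"
proof (cases "d = 0")
  case True
  then show ?thesis using twisted_centralD(1)[OF star_pair_zero_twisted_central[OF P] R] by simp
next
  case False
  have "pmul P R \<approx> - pmul R P" by (rule jordan_cong[OF star_pair_homogeneous(1)[OF P] R(1) False R(2) \<open>d \<noteq> e\<close>])
  also have "\<dots> = pmul R (- P)" by (simp add: pmul_minus_right)
  also have "\<dots> \<approx> pmul R P'" by (rule cong_I_pmul_right, rule cong_I_sym, rule star_pair_nonzero_cong[OF P False])
  finally show ?thesis .
qed

lemma star_pair_pmul_distinct_cong: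
  assumes P: "star_pair a P P'" and Q: "star_pair b Q Q'" and "a \<noteq> b"
  shows "pmul Q' P' \<approx> - pmul P Q"
proof -
  note hom = star_pair_homogeneous(1)[OF P] star_pair_homogeneous(1)[OF Q]
  consider "a = 0" "b \<noteq> 0" | "a \<noteq> 0" "b = 0" | "a \<noteq> 0" "b \<noteq> 0" using \<open>a \<noteq> b\<close> by blast
  then show ?thesis
  proof cases
    case 1
    have "pmul Q' P' \<approx> pmul (- Q) P'" by (rule cong_I_pmul_left, rule star_pair_nonzero_cong[OF Q 1(2)])
    also have "\<dots> = - pmul Q P'" by (simp add: pmul_minus_left)
    also have "\<dots> \<approx> - pmul P Q"
      using star_pair_pmul_right_cong[OF P hom(2) 1(2)] 1 by (simp add: cong_I_uminus cong_I_sym)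
    finally show ?thesis .
  next
    case 2
    have "pmul Q' P' \<approx> pmul Q' (- P)" by (rule cong_I_pmul_right, rule star_pair_nonzero_cong[OF P 2(1)])
    also have "\<dots> = - pmul Q' P" by (simp add: pmul_minus_right)
    also have "\<dots> \<approx> - pmul P Q"
      using twisted_centralD(2)[OF star_pair_zero_twisted_central[OF Q 2(2)] hom(1) 2(1)]
      by (simp add: cong_I_uminus cong_I_sym)
    finally show ?thesis .
  next
    case 3
    have "pmul Q' P' \<approx> pmul (- Q) (- P)"
      using star_pair_nonzero_cong[OF Q 3(2)] star_pair_nonzero_cong[OF P 3(1)] by (rule cong_I_pmul)
    also have "\<dots> = pmul Q P" by (simp add: pmul_minus_left pmul_minus_right)
    also have "\<dots> \<approx> - pmul P Q" using jordan_cong[OF hom(2,1)] 3 \<open>a \<noteq> b\<close> by simp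
    finally show ?thesis .
  qed
qed

lemma star_pair_pmul_same_twisted_central:
  assumes P: "star_pair a P P'" and Q: "star_pair a Q Q'" and "a \<noteq> 0"
  shows "twisted_central (pmul P Q) (pmul Q' P')"
  unfolding twisted_central_def
proof (intro allI impI conjI; elim conjE)
  fix R :: "'a fpoly" and e assume R: "homogeneous e R" "e \<noteq> 0"
  note hom = star_pair_homogeneous(1)[OF P] star_pair_homogeneous(1)[OF Q]
  have "pmul Q' P' \<approx> pmul (- Q) (- P)"
    using star_pair_nonzero_cong[OF Q \<open>a \<noteq> 0\<close>] star_pair_nonzero_cong[OF P \<open>a \<noteq> 0\<close>]
    by (rule cong_I_pmul)
  then have QP: "pmul Q' P' \<approx> pmul Q P" by (simp add: pmul_minus_left pmul_minus_right)
  have "pmul (pmul P Q) R \<approx> pmul R (pmul Q P)" by (rule swap_cong[OF hom R(1) \<open>a \<noteq> 0\<close> R(2)])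
  also have "\<dots> \<approx> pmul R (pmul Q' P')" by (rule cong_I_pmul_right, rule cong_I_sym, rule QP)
  finally show "pmul (pmul P Q) R \<approx> pmul R (pmul Q' P')" .
  have "pmul (pmul Q' P') R \<approx> pmul (pmul Q P) R" by (rule cong_I_pmul_left, rule QP)
  also have "\<dots> \<approx> pmul R (pmul P Q)" by (rule swap_cong[OF hom(2,1) R(1) \<open>a \<noteq> 0\<close> R(2)])
  finally show "pmul (pmul Q' P') R \<approx> pmul R (pmul P Q)" .
qed

lemma degree_zero_pmul_cong:
  assumes hom: "homogeneous 0 P" "homogeneous 0 P'" "homogeneous 0 Q" "homogeneous 0 Q'"
    and tc: "twisted_central P P'" "twisted_central Q Q'"
    and R: "homogeneous e R" "e \<noteq> 0"
  shows "pmul (pmul P Q) R \<approx> pmul R (pmul Q' P')"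
proof -
  have degs: "{0, 0, e} \<subseteq> {0, e}" "{0, e, 0} \<subseteq> {0, e}" "{e, 0, 0} \<subseteq> {0, e}" by auto
  have "pmul (pmul P Q) R \<approx> pmul P (pmul Q R)" by (rule assoc_cong[OF hom(1,3) R(1) degs(1)])
  also have "\<dots> \<approx> pmul P (pmul R Q')" by (rule cong_I_pmul_right, rule twisted_centralD(1)[OF tc(2) R])
  also have "\<dots> \<approx> pmul (pmul P R) Q'"
    by (rule cong_I_sym, rule assoc_cong[OF hom(1) R(1) hom(4) degs(2)])
  also have "\<dots> \<approx> pmul (pmul R P') Q'" by (rule cong_I_pmul_left, rule twisted_centralD(1)[OF tc(1) R])
  also have "\<dots> \<approx> pmul R (pmul P' Q')" by (rule assoc_cong[OF R(1) hom(2,4) degs(3)])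
  also have "\<dots> \<approx> pmul R (pmul Q' P')" by (rule cong_I_pmul_right, rule comm_cong[OF hom(2,4)])
  finally show ?thesis .
qed

lemma star_pair_pmul:
  assumes P: "star_pair a P P'" and Q: "star_pair b Q Q'"
  shows "star_pair (a + b) (pmul P Q) (pmul Q' P')"
proof -
  note homP = star_pair_homogeneous[OF P] and homQ = star_pair_homogeneous[OF Q]
  have "homogeneous (a + b) (pmul P Q)" by (rule homogeneous_pmul[OF homP(1) homQ(1)])
  moreover have "homogeneous (a + b) (pmul Q' P')"
    using homogeneous_pmul[OF homQ(2) homP(2)] by (simp add: add.commute)
  moreover consider "a \<noteq> b" | "a = b" "a \<noteq> 0" | "a = 0" "b = 0" by blast
  then have "if a + b = 0 then twisted_central (pmul P Q) (pmul Q' P') else pmul Q' P' \<approx> - pmul P Q"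
  proof cases
    case 1
    then show ?thesis using star_pair_pmul_distinct_cong[OF P Q] by (simp add: grp_add_eq_0_iff)
  next
    case 2
    then show ?thesis using star_pair_pmul_same_twisted_central[OF P] Q by simp
  next
    case 3
    note tc = star_pair_zero_twisted_central[OF P 3(1)] star_pair_zero_twisted_central[OF Q 3(2)]
    have hom0: "homogeneous 0 P" "homogeneous 0 P'" "homogeneous 0 Q" "homogeneous 0 Q'"
      using homP homQ 3 by simp_all
    have "pmul (pmul P Q) R \<approx> pmul R (pmul Q' P')" "pmul (pmul Q' P') R \<approx> pmul R (pmul P Q)"
      if "homogeneous e R" "e \<noteq> 0" for e R
      using degree_zero_pmul_cong[OF hom0 tc that]
        degree_zero_pmul_cong[OF hom0(4,3,2,1) tc(2,1)[THEN twisted_central_commute] that]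
      by simp_all
    then show ?thesis using 3 by (auto simp: twisted_central_def)
  qed
  ultimately show ?thesis by (simp add: star_pair_def)
qed

lemma star_pair_monomial:
  "nonzero_vars m \<Longrightarrow> star_pair (mdeg m) (single m 1) (mstar m)"
proof (induction m)
  case (MVar x)
  then show ?case using star_pair_pvar[of x] by (simp add: pvar_def)
next
  case (MMul u v)
  then have "star_pair (mdeg u + mdeg v) (pmul (single u 1) (single v 1) :: 'a fpoly)
      (pmul (mstar v) (mstar u))"
    by (intro star_pair_pmul) simp_all
  then show ?case by (simp add: pmul_single)
qed

lemma homogeneous_hcomp_0: "homogeneous h f \<Longrightarrow> h \<noteq> 0 \<Longrightarrow> hcomp 0 f = 0"
  by (simp add: homogeneous_iff hcomp_eq_0_iff)

lemma star_cong_uminus: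
  assumes "f \<in> Usub" "hcomp 0 f = 0"
  shows "star f \<approx> - f"
proof -
  have "star f = (\<Sum>m\<in>keys f. pscale (lookup f m) (mstar m))"
    by (simp add: star_def)
  also have "\<dots> \<approx> (\<Sum>m\<in>keys f. pscale (lookup f m) (- single m 1))"
  proof (rule cong_I_sum)
    fix m assume m: "m \<in> keys f"
    have "mdeg m \<noteq> 0" using assms(2) m by (simp add: hcomp_eq_0_iff)
    with star_pair_monomial[OF nonzero_vars_keys_Usub[OF assms(1) m]]
    show "mstar m \<approx> - single m 1" by (rule star_pair_nonzero_cong)
  qed
  also have "\<dots> = - f"
    by (simp add: pscale_minus_right sum_negf sum_keys_single_expansion)
  finally show ?thesis .
qed

lemma star_pmul_cong:
  assumes "v \<in> Usub" "w \<in> Usub" "h \<noteq> 0" "homogeneous h v" "homogeneous h w"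
  shows "star (pmul v w) \<approx> pmul w v"
proof -
  have "star (pmul v w) \<approx> pmul (- w) (- v)"
    unfolding star_pmul using assms
    by (intro cong_I_pmul star_cong_uminus homogeneous_hcomp_0)
  then show ?thesis by (simp add: pmul_minus_left pmul_minus_right)
qed

lemma pmul_pvar_cong_star:
  assumes "f \<in> Usub" "vdeg x \<noteq> 0" "hcomp (vdeg x) f = 0"
  shows "pmul f (pvar x) \<approx> pmul (pvar x) (star f)"
proof -
  have "pmul f (pvar x) = pmul (\<Sum>m\<in>keys f. pscale (lookup f m) (single m 1)) (pvar x)"
    by (simp only: sum_keys_single_expansion)
  also have "\<dots> = (\<Sum>m\<in>keys f. pscale (lookup f m) (pmul (single m 1) (pvar x)))"
    by (simp add: pmul_sum_left pmul_pscale_left)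
  also have "\<dots> \<approx> (\<Sum>m\<in>keys f. pscale (lookup f m) (pmul (pvar x) (mstar m)))"
  proof (rule cong_I_sum)
    fix m assume m: "m \<in> keys f"
    then have "mdeg m \<noteq> vdeg x" using assms(3) by (simp add: hcomp_eq_0_iff)
    then show "pmul (single m 1) (pvar x) \<approx> pmul (pvar x) (mstar m)"
      using star_pair_monomial[OF nonzero_vars_keys_Usub[OF assms(1) m]] homogeneous_pvar assms(2)
      by (rule star_pair_pmul_right_cong[rotated 3])
  qed
  also have "\<dots> = pmul (pvar x) (star f)"
    by (simp add: star_def pmul_sum_right pmul_pscale_right)
  finally show ?thesis .
qed

lemma star_ne_self: "\<exists>f \<in> Usub. star f \<noteq> (f :: 'a::field fpoly)"
proof
  let ?x = "(0, (1, 0)) :: var" and ?y = "(1, (1, 0)) :: var"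
  let ?f = "pmul (pvar ?x) (pvar ?y) :: 'a fpoly"
  have "vdeg ?x \<noteq> 0" "vdeg ?y \<noteq> 0" by (simp_all add: vdeg_def zero_prod_def)
  then show "?f \<in> Usub" by (intro pmul_in_Usub pvar_in_Usub)
  have "lookup (star ?f) (MMul (MVar ?x) (MVar ?y)) \<noteq> lookup ?f (MMul (MVar ?x) (MVar ?y))"
    by (simp add: lookup_star pvar_def lookup_single)
  then show "star ?f \<noteq> ?f" by auto
qed

section \<open>Conjugation in the octonions\<close>

lemma oconj_omul: "\<And>a b. oconj (omul \<mu> \<beta> \<gamma> a b) = omul \<mu> \<beta> \<gamma> (oconj b) (oconj a)"
  and omul_oscale_left: "\<And>a b. omul \<mu> \<beta> \<gamma> (oscale c a) b = oscale c (omul \<mu> \<beta> \<gamma> a b)"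
  and omul_oscale_right: "\<And>a b. omul \<mu> \<beta> \<gamma> a (oscale c b) = oscale c (omul \<mu> \<beta> \<gamma> a b)"
  and oscale_mult: "\<And>a. oscale (c * d) a = oscale c (oscale d a)"
  and oscale_add_left: "\<And>a. oscale (c + d) a = oscale c a + oscale d a"
  and oconj_add: "\<And>a b. oconj (a + b) = oconj a + oconj b"
  and oconj_oscale: "\<And>a. oconj (oscale c a) = oscale c (oconj a)"
  by (simp only: split_paired_all; simp add: algebra_simps)+

lemma oscale_zero_left [simp]: "\<And>a. oscale 0 a = 0"
  by (simp only: split_paired_all) (simp add: zero_prod_def)

lemma oconj_zero [simp]: "oconj 0 = 0"
  by (simp add: zero_prod_def)

lemma oconj_sum: "oconj (\<Sum>i\<in>A. F i) = (\<Sum>i\<in>A. oconj (F i))"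
  by (induction A rule: infinite_finite_induct) (simp_all add: oconj_add)

lemma oconj_ohom: "g \<noteq> 0 \<Longrightarrow> z \<in> ohom g \<Longrightarrow> oconj z = oscale (- 1) z"
  by (cases g) (auto simp: ohom_def qhom_def zero_prod_def split: if_splits)

lemma peval_add: "peval \<mu> \<beta> \<gamma> \<phi> (p + q) = peval \<mu> \<beta> \<gamma> \<phi> p + peval \<mu> \<beta> \<gamma> \<phi> q"
  unfolding peval_def by (rule sum_keys_add) (simp_all add: oscale_add_left)

lemma peval_zero [simp]: "peval \<mu> \<beta> \<gamma> \<phi> 0 = 0"
  by (simp add: peval_def)

lemma peval_sum: "peval \<mu> \<beta> \<gamma> \<phi> (\<Sum>i\<in>A. F i) = (\<Sum>i\<in>A. peval \<mu> \<beta> \<gamma> \<phi> (F i))"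
  by (induction A rule: infinite_finite_induct) (simp_all add: peval_add)

lemma peval_single: "peval \<mu> \<beta> \<gamma> \<phi> (single m c) = oscale c (meval \<mu> \<beta> \<gamma> \<phi> m)"
  unfolding peval_def by (rule sum_keys_single) simp

lemma oconj_meval:
  assumes "nonzero_vars m" "graded_eval \<phi>"
  shows "oconj (meval \<mu> \<beta> \<gamma> \<phi> m) = oscale (msign m) (meval \<mu> \<beta> \<gamma> \<phi> (mrev m))"
  using assms(1)
proof (induction m)
  case (MVar x)
  have "\<phi> x \<in> ohom (vdeg x)" using assms(2) unfolding graded_eval_def by blast
  with MVar show ?case by (simp add: oconj_ohom msign_def)
next
  case (MMul u v)
  then show ?case
    by (simp add: oconj_omul omul_oscale_left omul_oscale_right msign_MMul mult.commute
        flip: oscale_mult)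
qed

lemma peval_star:
  assumes "f \<in> Usub" "graded_eval \<phi>"
  shows "peval \<mu> \<beta> \<gamma> \<phi> (star f) = oconj (peval \<mu> \<beta> \<gamma> \<phi> f)"
proof -
  have "peval \<mu> \<beta> \<gamma> \<phi> (star f) =
      (\<Sum>m\<in>keys f. oscale (lookup f m * msign m) (meval \<mu> \<beta> \<gamma> \<phi> (mrev m)))"
    by (simp add: star_def mstar_eq_single pscale_single peval_sum peval_single)
  also have "\<dots> = (\<Sum>m\<in>keys f. oconj (oscale (lookup f m) (meval \<mu> \<beta> \<gamma> \<phi> m)))"
    using nonzero_vars_keys_Usub[OF assms(1)]
    by (intro sum.cong) (simp_all add: oconj_oscale oconj_meval assms(2) oscale_mult)
  also have "\<dots> = oconj (peval \<mu> \<beta> \<gamma> \<phi> f)"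
    by (simp add: peval_def oconj_sum)
  finally show ?thesis .
qed

theorem mainTheorem7:
  fixes Fty :: "'a::field itself"
  defines "U \<equiv> (Usub :: 'a fpoly set)"
      and "I \<equiv> (Iid :: 'a fpoly set)"
  shows
    \<comment> \<open>(1) star is an involution of U (an anti-automorphism of order 2)\<close>
    "(\<forall>f\<in>U. star f \<in> U)
     \<and> (\<forall>f\<in>U. \<forall>h\<in>U. star (f + h) = star f + star h)
     \<and> (\<forall>c. \<forall>f\<in>U. star (pscale c f) = pscale c (star f))
     \<and> (\<forall>f\<in>U. \<forall>h\<in>U. star (pmul f h) = pmul (star h) (star f))
     \<and> (\<forall>f\<in>U. star (star f) = f)
     \<and> (\<exists>f\<in>U. star f \<noteq> f)
     \<comment> \<open>(2)\<close>
     \<and> (\<forall>f\<in>U. hcomp 0 f = 0 \<longrightarrow> star f - (- f) \<in> I)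
     \<comment> \<open>(3)\<close>
     \<and> (\<forall>v\<in>U. \<forall>w\<in>U. \<forall>h. h \<noteq> 0 \<and> homogeneous h v \<and> homogeneous h w
          \<longrightarrow> star (pmul v w) - pmul w v \<in> I)
     \<comment> \<open>(4)\<close>
     \<and> (\<forall>f\<in>U. \<forall>x. vdeg x \<noteq> 0 \<and> hcomp (vdeg x) f = 0
          \<longrightarrow> pmul f (pvar x) - pmul (pvar x) (star f) \<in> I)
     \<comment> \<open>(5)\<close>
     \<and> (\<forall>f\<in>U. \<forall>\<mu> \<beta> \<gamma> (\<phi> :: var \<Rightarrow> 'a oalg).
          4 * \<mu> + 1 \<noteq> 0 \<and> \<beta> \<noteq> 0 \<and> \<gamma> \<noteq> 0 \<and> graded_eval \<phi>
          \<longrightarrow> peval \<mu> \<beta> \<gamma> \<phi> (star f) = oconj (peval \<mu> \<beta> \<gamma> \<phi> f))"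
  unfolding U_def I_def
proof (intro conjI)
  show "\<forall>f\<in>Usub. star f \<in> Usub" by (simp add: star_in_Usub)
  show "\<forall>f\<in>Usub. \<forall>h\<in>Usub. star (f + h) = star f + star h" by (simp add: star_add)
  show "\<forall>c. \<forall>f\<in>Usub. star (pscale c f) = pscale c (star f)" by (simp add: star_pscale)
  show "\<forall>f\<in>Usub. \<forall>h\<in>Usub. star (pmul f h) = pmul (star h) (star f)" by (simp add: star_pmul)
  show "\<forall>f\<in>Usub. star (star f) = f" by (simp add: star_star)
  show "\<exists>f\<in>Usub. star f \<noteq> (f :: 'a fpoly)" by (rule star_ne_self)
  show "\<forall>f\<in>Usub. hcomp 0 f = 0 \<longrightarrow> star f - (- f) \<in> (Iid :: 'a fpoly set)"
    using star_cong_uminus unfolding cong_I_def by blast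
  show "\<forall>v\<in>Usub. \<forall>w\<in>Usub. \<forall>h. h \<noteq> 0 \<and> homogeneous h v \<and> homogeneous h w
      \<longrightarrow> star (pmul v w) - pmul w v \<in> (Iid :: 'a fpoly set)"
    using star_pmul_cong unfolding cong_I_def by blast
  show "\<forall>f\<in>Usub. \<forall>x. vdeg x \<noteq> 0 \<and> hcomp (vdeg x) f = 0
      \<longrightarrow> pmul f (pvar x) - pmul (pvar x) (star f) \<in> (Iid :: 'a fpoly set)"
    using pmul_pvar_cong_star unfolding cong_I_def by blast
  show "\<forall>f\<in>Usub. \<forall>\<mu> \<beta> \<gamma> (\<phi> :: var \<Rightarrow> 'a oalg). 4 * \<mu> + 1 \<noteq> 0 \<and> \<beta> \<noteq> 0 \<and> \<gamma> \<noteq> 0 \<and> graded_eval \<phi>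
      \<longrightarrow> peval \<mu> \<beta> \<gamma> \<phi> (star f) = oconj (peval \<mu> \<beta> \<gamma> \<phi> f)"
    by (simp add: peval_star)
qed

end
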